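(* Let $G$ be the central product of normal subgroups $H,K$ ($G=HK$, $[H,K]=1$) with $H'\cap K'=1$, and let $D$ be a divisible abelian group with trivial action. Then the homomorphism $$\theta'=(\operatorname{res}^G_H,\operatorname{res}^G_K,\nu):\operatorname{H}^2(G,D)\to\operatorname{H}^2(H,D)\oplus\operatorname{H}^2(K,D)\oplus\operatorname{Hom}(H\otimes K,D)$$ is injective.
   Context: $X\otimes Y$ denotes the abelian tensor product $X/X'\otimes_{\mathbb{Z}}Y/Y'$. For $\xi\in\operatorname{H}^2(G,D)$ represented by a 2-cocycle $f$, $\nu(\xi)(hH'\otimes kK')=f(h,k)-f(k,h)$ for $h\in H$, $k\in K$. *)

theory Defs
  imports "HOL-Algebra.Algebra"
begin

text \<open>Inhomogeneous 2-cochains/cocycles/coboundaries of a group G with values in an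
abelian group D (written multiplicatively in HOL-Algebra), with trivial action.\<close>

definition cocycle2 :: "('g, 'a) monoid_scheme \<Rightarrow> ('d, 'b) monoid_scheme \<Rightarrow> ('g \<Rightarrow> 'g \<Rightarrow> 'd) \<Rightarrow> bool" where
  "cocycle2 G D f \<longleftrightarrow>
     (\<forall>g\<in>carrier G. \<forall>h\<in>carrier G. f g h \<in> carrier D) \<and>
     (\<forall>g\<in>carrier G. \<forall>h\<in>carrier G. \<forall>k\<in>carrier G.
        f g h \<otimes>\<^bsub>D\<^esub> f (g \<otimes>\<^bsub>G\<^esub> h) k = f h k \<otimes>\<^bsub>D\<^esub> f g (h \<otimes>\<^bsub>G\<^esub> k))"

definition coboundary2 :: "('g, 'a) monoid_scheme \<Rightarrow> ('d, 'b) monoid_scheme \<Rightarrow> ('g \<Rightarrow> 'g \<Rightarrow> 'd) \<Rightarrow> bool" where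
  "coboundary2 G D f \<longleftrightarrow>
     (\<exists>c. (\<forall>g\<in>carrier G. c g \<in> carrier D) \<and>
          (\<forall>g\<in>carrier G. \<forall>h\<in>carrier G.
             f g h = c h \<otimes>\<^bsub>D\<^esub> inv\<^bsub>D\<^esub> (c (g \<otimes>\<^bsub>G\<^esub> h)) \<otimes>\<^bsub>D\<^esub> c g))"

definition cohomologous2 :: "('g, 'a) monoid_scheme \<Rightarrow> ('d, 'b) monoid_scheme \<Rightarrow> ('g \<Rightarrow> 'g \<Rightarrow> 'd) \<Rightarrow> ('g \<Rightarrow> 'g \<Rightarrow> 'd) \<Rightarrow> bool" where
  "cohomologous2 G D f1 f2 \<longleftrightarrow> coboundary2 G D (\<lambda>g h. f1 g h \<otimes>\<^bsub>D\<^esub> inv\<^bsub>D\<^esub> (f2 g h))"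

abbreviation restr_grp :: "('g, 'a) monoid_scheme \<Rightarrow> 'g set \<Rightarrow> ('g, 'a) monoid_scheme" where
  "restr_grp G S \<equiv> G\<lparr>carrier := S\<rparr>"

text \<open>Value of nu(f) on the generator hH' (x) kK' of H (x) K: f(h,k) - f(k,h).\<close>
definition nu_val :: "('g, 'a) monoid_scheme \<Rightarrow> ('d, 'b) monoid_scheme \<Rightarrow> ('g \<Rightarrow> 'g \<Rightarrow> 'd) \<Rightarrow> 'g \<Rightarrow> 'g \<Rightarrow> 'd" where
  "nu_val G D f h k = f h k \<otimes>\<^bsub>D\<^esub> inv\<^bsub>D\<^esub> (f k h)"

definition divisible_group :: "('d, 'b) monoid_scheme \<Rightarrow> bool" where
  "divisible_group D \<longleftrightarrow> (\<forall>x\<in>carrier D. \<forall>n::nat. n > 0 \<longrightarrow> (\<exists>y\<in>carrier D. y [^]\<^bsub>D\<^esub> n = x))"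

end

theory Submission
  imports Defs
begin

text \<open>Let \<open>f = f1 - f2\<close>. It is a 2-cocycle, a coboundary on \<open>H\<close> and on \<open>K\<close> (of \<open>cH\<close> and
  \<open>cK\<close>, say), and the hypothesis on \<open>\<nu>\<close> says that it is symmetric on \<open>H \<times> K\<close>; we show it is a
  coboundary on \<open>G\<close>. Let \<open>E\<close> be the central extension of \<open>G\<close> by \<open>D\<close> with factor set \<open>f\<close>.
  The maps \<open>(a, h) \<mapsto> a + cH h\<close> and \<open>(a, k) \<mapsto> a + cK k\<close> are homomorphisms on the preimages
  \<open>D \<times> H\<close> and \<open>D \<times> K\<close>, which commute elementwise by the symmetry of \<open>f\<close>. On \<open>D \<times> H'\<close>
  and \<open>D \<times> K'\<close> they agree on the intersection \<open>D \<times> 1\<close>, since \<open>H' \<inter> K' = 1\<close>, so they glue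
  to a homomorphism on \<open>(D \<times> H') (D \<times> K')\<close>. This subgroup contains every commutator of \<open>E\<close>
  and the glued map kills them; since \<open>D\<close> is divisible, a Zorn argument extends it to a
  homomorphism \<open>\<psi> : E \<rightarrow> D\<close> that is the identity on the central \<open>D\<close>, and \<open>c g = \<psi> (0, g)\<close>
  is a cochain with coboundary \<open>f\<close>.\<close>

definition commutator :: "('a, 'b) monoid_scheme \<Rightarrow> 'a \<Rightarrow> 'a \<Rightarrow> 'a" where
  "commutator G x y = x \<otimes>\<^bsub>G\<^esub> y \<otimes>\<^bsub>G\<^esub> inv\<^bsub>G\<^esub> x \<otimes>\<^bsub>G\<^esub> inv\<^bsub>G\<^esub> y"

lemma (in group) inv_mult_cancel_left: "x \<in> carrier G \<Longrightarrow> y \<in> carrier G \<Longrightarrow> inv x \<otimes> (x \<otimes> y) = y"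
  by (simp add: m_assoc[symmetric])

lemma (in group) mult_inv_cancel_left: "x \<in> carrier G \<Longrightarrow> y \<in> carrier G \<Longrightarrow> x \<otimes> (inv x \<otimes> y) = y"
  by (simp add: m_assoc[symmetric])

lemma (in comm_group) mult_eq_of_inv_mult_eq:
  assumes "a \<in> carrier G" "b \<in> carrier G" "c \<in> carrier G" "d \<in> carrier G"
    and "inv a \<otimes> b = c \<otimes> inv d"
  shows "b \<otimes> d = a \<otimes> c"
proof -
  have "b \<otimes> d = a \<otimes> (inv a \<otimes> b) \<otimes> d" using assms(1,2) by (simp add: m_assoc[symmetric])
  also have "\<dots> = a \<otimes> (c \<otimes> inv d) \<otimes> d" by (simp only: assms(5))
  also have "\<dots> = a \<otimes> c" using assms(1,3,4) by (simp add: m_assoc)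
  finally show ?thesis .
qed

lemma (in comm_group) mult_inv_eq_swap:
  assumes "a \<in> carrier G" "b \<in> carrier G" "c \<in> carrier G" "d \<in> carrier G"
    and "a \<otimes> inv b = c \<otimes> inv d"
  shows "a \<otimes> inv c = b \<otimes> inv d"
proof -
  have "a \<otimes> inv c = (a \<otimes> inv b) \<otimes> (b \<otimes> inv c)"
    using assms(1-3) by (simp add: m_assoc[symmetric], simp add: m_assoc)
  also have "\<dots> = (c \<otimes> inv d) \<otimes> (b \<otimes> inv c)" by (simp only: assms(5))
  also have "\<dots> = b \<otimes> inv d" using assms(2-4) by (simp add: m_ac, simp add: m_assoc[symmetric])
  finally show ?thesis .
qed

lemma divisible_group_root:
  assumes "divisible_group D" "group D" "x \<in> carrier D" "(n::nat) > 0 \<or> x = \<one>\<^bsub>D\<^esub>"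
  shows "\<exists>y\<in>carrier D. y [^]\<^bsub>D\<^esub> n = x"
proof (cases "n > 0")
  case True
  then show ?thesis using assms(1,3) unfolding divisible_group_def by blast
next
  case False
  then have "n = 0" "x = \<one>\<^bsub>D\<^esub>" using assms(4) by auto
  then show ?thesis using group.is_monoid[OF assms(2)] by (auto intro: monoid.one_closed)
qed

lemma (in group) normal_if_commutators_mem:
  assumes "subgroup N G"
    and "\<And>a b. a \<in> carrier G \<Longrightarrow> b \<in> carrier G \<Longrightarrow> commutator G a b \<in> N"
  shows "N \<lhd> G"
proof (rule normal_invI[OF assms(1)])
  fix x h assume x: "x \<in> carrier G" and h: "h \<in> N"
  have hc: "h \<in> carrier G" using subgroup.mem_carrier[OF assms(1) h] .
  have "x \<otimes> h \<otimes> inv x = commutator G x h \<otimes> h"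
    using x hc by (simp add: commutator_def m_assoc)
  then show "x \<otimes> h \<otimes> inv x \<in> N"
    using subgroup.m_closed[OF assms(1) assms(2)[OF x hc] h] by simp
qed

lemma (in normal) int_pow_mem_iff_ord_dvd:
  assumes "g \<in> carrier G"
  shows "g [^] (m::int) \<in> H \<longleftrightarrow> int (group.ord (G Mod H) (H #> g)) dvd m"
proof -
  interpret Q: group "G Mod H" by (rule factorgroup_is_group)
  have "H #> g \<in> carrier (G Mod H)" using assms by (simp add: carrier_FactGroup)
  from Q.int_pow_eq_id[OF this, of m]
  have "int (Q.ord (H #> g)) dvd m \<longleftrightarrow> H #> (g [^] m) = H"
    unfolding FactGroup_int_pow[OF assms] one_FactGroup by (rule sym)
  also have "\<dots> \<longleftrightarrow> g [^] m \<in> H"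
    using coset_join1[OF _ int_pow_closed[OF assms] subgroup_axioms]
      coset_join2[OF int_pow_closed[OF assms] subgroup_axioms] by blast
  finally show ?thesis by simp
qed

lemma hom_restrict_subset:
  "r \<in> hom (G\<lparr>carrier := L\<rparr>) H \<Longrightarrow> L' \<subseteq> L \<Longrightarrow> r \<in> hom (G\<lparr>carrier := L'\<rparr>) H"
  unfolding hom_def by auto

lemma (in group) hom_restrict_inv:
  assumes "subgroup A G" "group H" "r \<in> hom (G\<lparr>carrier := A\<rparr>) H" "x \<in> A"
  shows "r (inv x) = inv\<^bsub>H\<^esub> (r x)"
proof -
  have "group_hom (G\<lparr>carrier := A\<rparr>) H r"
    using assms subgroup.subgroup_is_group[OF assms(1) is_group]
    by (simp add: group_hom_def group_hom_axioms_def)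
  then show ?thesis
    using group_hom.hom_inv[of "G\<lparr>carrier := A\<rparr>" H r x] m_inv_consistent[OF assms(1,4)] assms(4) by simp
qed

lemma (in group) hom_restrict_commutator:
  assumes "comm_group H" "subgroup A G" "r \<in> hom (G\<lparr>carrier := A\<rparr>) H" "u \<in> A" "v \<in> A"
  shows "r (commutator G u v) = \<one>\<^bsub>H\<^esub>"
proof -
  interpret H: comm_group H by (rule assms(1))
  have r_mult: "r (x \<otimes> y) = r x \<otimes>\<^bsub>H\<^esub> r y" if "x \<in> A" "y \<in> A" for x y
    using hom_mult[OF assms(3)] that by simp
  have r_closed: "r x \<in> carrier H" if "x \<in> A" for x
    using hom_in_carrier[OF assms(3)] that by simp
  have inv_mem: "inv u \<in> A" "inv v \<in> A" using assms(4,5) subgroup.m_inv_closed[OF assms(2)] by auto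
  have "r (commutator G u v) = r u \<otimes>\<^bsub>H\<^esub> r v \<otimes>\<^bsub>H\<^esub> inv\<^bsub>H\<^esub> (r u) \<otimes>\<^bsub>H\<^esub> inv\<^bsub>H\<^esub> (r v)"
    using assms(4,5) inv_mem subgroup.m_closed[OF assms(2)]
    by (simp add: commutator_def r_mult hom_restrict_inv[OF assms(2) H.is_group assms(3)])
  also have "\<dots> = (r u \<otimes>\<^bsub>H\<^esub> r v) \<otimes>\<^bsub>H\<^esub> inv\<^bsub>H\<^esub> (r u \<otimes>\<^bsub>H\<^esub> r v)"
    using r_closed assms(4,5) by (simp add: H.inv_mult H.m_assoc)
  also have "\<dots> = \<one>\<^bsub>H\<^esub>" using r_closed assms(4,5) by simp
  finally show ?thesis .
qed

lemma set_mult_memI: "a \<in> A \<Longrightarrow> b \<in> B \<Longrightarrow> a \<otimes>\<^bsub>G\<^esub> b \<in> A <#>\<^bsub>G\<^esub> B"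
  unfolding set_mult_def by blast

lemma set_mult_memE:
  assumes "x \<in> A <#>\<^bsub>G\<^esub> B"
  obtains a b where "a \<in> A" "b \<in> B" "x = a \<otimes>\<^bsub>G\<^esub> b"
  using assms unfolding set_mult_def by blast

lemma (in group) mult_mult_swap_middle:
  assumes "a \<in> carrier G" "b \<in> carrier G" "a' \<in> carrier G" "b' \<in> carrier G"
    and "b \<otimes> a' = a' \<otimes> b"
  shows "a \<otimes> b \<otimes> (a' \<otimes> b') = a \<otimes> a' \<otimes> (b \<otimes> b')"
proof -
  have "a \<otimes> b \<otimes> (a' \<otimes> b') = a \<otimes> (b \<otimes> a') \<otimes> b'" using assms(1-4) by (simp add: m_assoc)
  also have "\<dots> = a \<otimes> (a' \<otimes> b) \<otimes> b'" by (simp only: assms(5))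
  also have "\<dots> = a \<otimes> a' \<otimes> (b \<otimes> b')" using assms(1-4) by (simp add: m_assoc)
  finally show ?thesis .
qed

lemma (in group) subgroup_set_mult_commuting:
  assumes A: "subgroup A G" and B: "subgroup B G" and comm: "\<forall>a\<in>A. \<forall>b\<in>B. a \<otimes> b = b \<otimes> a"
  shows "subgroup (A <#> B) G"
proof (rule subgroupI)
  have "A \<subseteq> carrier G" "B \<subseteq> carrier G" using A B subgroup.subset by auto
  then show "A <#> B \<subseteq> carrier G" by (rule setmult_subset_G)
  show "A <#> B \<noteq> {}" using set_mult_memI[OF subgroup.one_closed[OF A] subgroup.one_closed[OF B]] by blast
next
  fix x assume "x \<in> A <#> B"
  then obtain a b where ab: "a \<in> A" "b \<in> B" "x = a \<otimes> b" by (rule set_mult_memE)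
  have inv: "inv a \<in> A" "inv b \<in> B"
    using ab subgroup.m_inv_closed[OF A] subgroup.m_inv_closed[OF B] by auto
  have "inv x = inv b \<otimes> inv a"
    using ab subgroup.mem_carrier[OF A] subgroup.mem_carrier[OF B] by (simp add: inv_mult_group)
  also have "\<dots> = inv a \<otimes> inv b" using comm[rule_format, OF inv] by (rule sym)
  finally show "inv x \<in> A <#> B" using set_mult_memI[OF inv] by simp
next
  fix x y assume "x \<in> A <#> B" "y \<in> A <#> B"
  then obtain a b a' b' where ab: "a \<in> A" "b \<in> B" "x = a \<otimes> b" "a' \<in> A" "b' \<in> B" "y = a' \<otimes> b'"
    by (auto elim!: set_mult_memE)
  have "x \<otimes> y = (a \<otimes> a') \<otimes> (b \<otimes> b')"
    unfolding ab(3,6) by (rule mult_mult_swap_middle)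
      (use ab comm[rule_format, OF ab(4,2)] subgroup.mem_carrier[OF A] subgroup.mem_carrier[OF B] in auto)
  moreover have "a \<otimes> a' \<in> A" "b \<otimes> b' \<in> B"
    using ab subgroup.m_closed[OF A] subgroup.m_closed[OF B] by auto
  ultimately show "x \<otimes> y \<in> A <#> B" using set_mult_memI by simp
qed

lemma (in group) commutator_mem_derived:
  "h \<in> H \<Longrightarrow> h' \<in> H \<Longrightarrow> commutator G h h' \<in> derived G H"
  unfolding derived_def commutator_def by (rule generate.incl) blast

lemma (in group) commutator_of_products:
  assumes A: "subgroup A G" and B: "subgroup B G" and comm: "\<forall>a\<in>A. \<forall>b\<in>B. a \<otimes> b = b \<otimes> a"
    and a: "a \<in> A" "a' \<in> A" and b: "b \<in> B" "b' \<in> B"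
  shows "commutator G (a \<otimes> b) (a' \<otimes> b') = commutator G a a' \<otimes> commutator G b b'"
proof -
  have carrier: "x \<in> carrier G" if "x \<in> A \<or> x \<in> B" for x
    using that subgroup.mem_carrier[OF A] subgroup.mem_carrier[OF B] by blast
  have swap: "y \<otimes> (x \<otimes> z) = x \<otimes> (y \<otimes> z)" if "x \<in> A" "y \<in> B" "z \<in> carrier G" for x y z
    using that carrier comm[rule_format, OF that(1,2)] by (simp add: m_assoc[symmetric])
  have inv: "inv a \<in> A" "inv a' \<in> A" "inv b \<in> B" "inv b' \<in> B"
    using a b subgroup.m_inv_closed[OF A] subgroup.m_inv_closed[OF B] by auto
  have "inv (a \<otimes> b) = inv a \<otimes> inv b" "inv (a' \<otimes> b') = inv a' \<otimes> inv b'"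
    using a b inv carrier comm[rule_format, OF inv(1,3)] comm[rule_format, OF inv(2,4)]
    by (simp_all add: inv_mult_group)
  then show ?thesis
    using a b inv carrier
    by (simp add: commutator_def m_assoc swap[of a' b] swap[of "inv a" b'] swap[of "inv a" b]
        swap[of "inv a'" "inv b"] swap[of "inv a'" b'] swap[of "inv a'" b])
qed

section \<open>Extending homomorphisms into a divisible abelian group\<close>

locale divisible_extension = group E + D: comm_group D
  for E :: "('e, 'x) monoid_scheme" (structure) and D :: "('d, 'y) monoid_scheme" +
  fixes S :: "'e set" and \<phi> :: "'e \<Rightarrow> 'd"
  assumes divisible: "divisible_group D"
    and subgroup_S: "subgroup S E"
    and hom_\<phi>: "\<phi> \<in> hom (E\<lparr>carrier := S\<rparr>) D"
    and commutator_mem: "\<And>a b. \<lbrakk>a \<in> carrier E; b \<in> carrier E\<rbrakk> \<Longrightarrow> commutator E a b \<in> S"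
    and \<phi>_commutator: "\<And>a b. \<lbrakk>a \<in> carrier E; b \<in> carrier E\<rbrakk> \<Longrightarrow> \<phi> (commutator E a b) = \<one>\<^bsub>D\<^esub>"
begin

text \<open>Partial extensions of \<open>\<phi>\<close> are recorded as graphs, so that the union of a chain is again one.\<close>

definition partial_ext :: "('e \<times> 'd) set \<Rightarrow> bool" where
  "partial_ext M \<longleftrightarrow> single_valued M \<and> subgroup (Domain M) E \<and> (\<forall>s\<in>S. (s, \<phi> s) \<in> M)
     \<and> (\<forall>(x, a)\<in>M. \<forall>(y, b)\<in>M. (x \<otimes> y, a \<otimes>\<^bsub>D\<^esub> b) \<in> M) \<and> Range M \<subseteq> carrier D"

definition ext_fun :: "('e \<times> 'd) set \<Rightarrow> 'e \<Rightarrow> 'd" where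
  "ext_fun M x = (THE a. (x, a) \<in> M)"

context
  fixes M assumes M: "partial_ext M"
begin

lemma ext_fun_eq:
  assumes "(x, a) \<in> M"
  shows "ext_fun M x = a"
  unfolding ext_fun_def
proof (rule the_equality)
  show "(x, a) \<in> M" by (rule assms)
  show "b = a" if "(x, b) \<in> M" for b
    using M assms that unfolding partial_ext_def by (auto dest: single_valuedD)
qed

lemma ext_fun_graph: "x \<in> Domain M \<Longrightarrow> (x, ext_fun M x) \<in> M"
  using ext_fun_eq by blast

lemma subgroup_Domain: "subgroup (Domain M) E"
  using M unfolding partial_ext_def by blast

lemma graph_mult: "(x, a) \<in> M \<Longrightarrow> (y, b) \<in> M \<Longrightarrow> (x \<otimes> y, a \<otimes>\<^bsub>D\<^esub> b) \<in> M"
  using M unfolding partial_ext_def by blast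

lemma graph_\<phi>: "s \<in> S \<Longrightarrow> (s, \<phi> s) \<in> M"
  using M unfolding partial_ext_def by blast

lemma ext_fun_closed: "x \<in> Domain M \<Longrightarrow> ext_fun M x \<in> carrier D"
  using M ext_fun_graph unfolding partial_ext_def by blast

lemma ext_fun_hom: "ext_fun M \<in> hom (E\<lparr>carrier := Domain M\<rparr>) D"
  by (rule homI) (auto intro: ext_fun_closed ext_fun_eq graph_mult ext_fun_graph)

lemma group_hom_ext_fun: "group_hom (E\<lparr>carrier := Domain M\<rparr>) D (ext_fun M)"
  using subgroup.subgroup_is_group[OF subgroup_Domain is_group] D.is_group ext_fun_hom
  by (simp add: group_hom_def group_hom_axioms_def)

lemma ext_fun_int_pow:
  assumes "x \<in> Domain M"
  shows "ext_fun M (x [^] (k::int)) = ext_fun M x [^]\<^bsub>D\<^esub> k"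
  using group_hom.hom_int_pow[OF group_hom_ext_fun] int_pow_consistent[OF subgroup_Domain assms] assms
  by simp

lemma normal_Domain: "Domain M \<lhd> E"
  using normal_if_commutators_mem[OF subgroup_Domain] commutator_mem graph_\<phi> by blast

lemma conj_mem_Domain: "t \<in> Domain M \<Longrightarrow> a \<in> carrier E \<Longrightarrow> a \<otimes> t \<otimes> inv a \<in> Domain M"
  using normal_invE(2)[OF normal_Domain] by blast

lemma ext_fun_conj:
  assumes t: "t \<in> Domain M" and a: "a \<in> carrier E"
  shows "ext_fun M (a \<otimes> t \<otimes> inv a) = ext_fun M t"
proof -
  have tc: "t \<in> carrier E" using subgroup.mem_carrier[OF subgroup_Domain t] .
  let ?c = "commutator E a t"
  have "(?c, \<one>\<^bsub>D\<^esub>) \<in> M"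
    using graph_\<phi>[OF commutator_mem[OF a tc]] \<phi>_commutator[OF a tc] by simp
  from graph_mult[OF this ext_fun_graph[OF t]]
  have "(?c \<otimes> t, \<one>\<^bsub>D\<^esub> \<otimes>\<^bsub>D\<^esub> ext_fun M t) \<in> M" .
  moreover have "?c \<otimes> t = a \<otimes> t \<otimes> inv a" using a tc by (simp add: commutator_def m_assoc)
  ultimately show ?thesis using ext_fun_eq ext_fun_closed[OF t] by simp
qed

text \<open>Whether or not \<open>g\<close> has finite order modulo the domain, the values on the powers of \<open>g\<close>
  lying in the domain come from a single root \<open>y\<close>; this is where divisibility of \<open>D\<close> is used.\<close>

lemma ext_fun_root:
  assumes g: "g \<in> carrier E"
  shows "\<exists>y\<in>carrier D. \<forall>m::int. g [^] m \<in> Domain M \<longrightarrow> ext_fun M (g [^] m) = y [^]\<^bsub>D\<^esub> m"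
proof -
  interpret N: normal "Domain M" E by (rule normal_Domain)
  define n where "n = group.ord (E Mod Domain M) (Domain M #> g)"
  have pow_mem: "g [^] m \<in> Domain M \<longleftrightarrow> int n dvd m" for m :: int
    unfolding n_def by (rule N.int_pow_mem_iff_ord_dvd[OF g])
  have gn: "g [^] int n \<in> Domain M" using pow_mem by simp
  have "n > 0 \<or> ext_fun M (g [^] int n) = \<one>\<^bsub>D\<^esub>"
  proof (cases "n = 0")
    case True
    then show ?thesis using group_hom.hom_one[OF group_hom_ext_fun] by simp
  qed simp
  then obtain y where y: "y \<in> carrier D" "y [^]\<^bsub>D\<^esub> n = ext_fun M (g [^] int n)"
    using divisible_group_root[OF divisible D.is_group ext_fun_closed[OF gn]] by blast
  have "ext_fun M (g [^] m) = y [^]\<^bsub>D\<^esub> m" if gm: "g [^] m \<in> Domain M" for m :: int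
  proof -
    obtain q where m: "m = int n * q" using pow_mem[of m] gm by (auto elim: dvdE)
    have "ext_fun M (g [^] m) = ext_fun M ((g [^] int n) [^] q)" using int_pow_pow[OF g, of "int n" q] m by simp
    also have "\<dots> = (y [^]\<^bsub>D\<^esub> int n) [^]\<^bsub>D\<^esub> q"
      using ext_fun_int_pow[OF gn, of q] y(2) by (simp add: int_pow_int)
    also have "\<dots> = y [^]\<^bsub>D\<^esub> m" using D.int_pow_pow[OF y(1), of "int n" q] m by simp
    finally show ?thesis .
  qed
  with y show ?thesis by blast
qed

end

definition adjoin :: "('e \<times> 'd) set \<Rightarrow> 'e \<Rightarrow> 'd \<Rightarrow> ('e \<times> 'd) set" where
  "adjoin M g y = {(t \<otimes> g [^] k, ext_fun M t \<otimes>\<^bsub>D\<^esub> y [^]\<^bsub>D\<^esub> k) | t (k::int). t \<in> Domain M}"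

context
  fixes M g y
  assumes M: "partial_ext M" and g: "g \<in> carrier E" and y: "y \<in> carrier D"
    and root: "\<And>m::int. g [^] m \<in> Domain M \<Longrightarrow> ext_fun M (g [^] m) = y [^]\<^bsub>D\<^esub> m"
begin

lemma Domain_carrier: "t \<in> Domain M \<Longrightarrow> t \<in> carrier E"
  using subgroup.mem_carrier[OF subgroup_Domain[OF M]] .

lemma adjoinI: "t \<in> Domain M \<Longrightarrow> (t \<otimes> g [^] (k::int), ext_fun M t \<otimes>\<^bsub>D\<^esub> y [^]\<^bsub>D\<^esub> k) \<in> adjoin M g y"
  unfolding adjoin_def by blast

lemma adjoinE:
  assumes "(x, a) \<in> adjoin M g y"
  obtains t and k :: int where "t \<in> Domain M" "x = t \<otimes> g [^] k" "a = ext_fun M t \<otimes>\<^bsub>D\<^esub> y [^]\<^bsub>D\<^esub> k"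
  using assms unfolding adjoin_def by blast

lemma subset_adjoin: "M \<subseteq> adjoin M g y"
proof
  fix p assume p: "p \<in> M"
  obtain x a where xa: "p = (x, a)" by (cases p)
  then have x: "x \<in> Domain M" using p by blast
  have "(x \<otimes> g [^] (0::int), ext_fun M x \<otimes>\<^bsub>D\<^esub> y [^]\<^bsub>D\<^esub> (0::int)) \<in> adjoin M g y"
    by (rule adjoinI[OF x])
  then show "p \<in> adjoin M g y"
    using xa ext_fun_eq[OF M p[unfolded xa]] ext_fun_closed[OF M x] Domain_carrier[OF x] by simp
qed

lemma generator_mem_Domain_adjoin: "g \<in> Domain (adjoin M g y)"
proof -
  have "(\<one> \<otimes> g [^] (1::int), ext_fun M \<one> \<otimes>\<^bsub>D\<^esub> y [^]\<^bsub>D\<^esub> (1::int)) \<in> adjoin M g y"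
    by (rule adjoinI[OF subgroup.one_closed[OF subgroup_Domain[OF M]]])
  then show ?thesis using g by auto
qed

lemma single_valued_adjoin: "single_valued (adjoin M g y)"
proof (rule single_valuedI)
  fix x a b assume "(x, a) \<in> adjoin M g y" "(x, b) \<in> adjoin M g y"
  then obtain t t' and k l :: int where t: "t \<in> Domain M" and t': "t' \<in> Domain M"
    and x: "x = t \<otimes> g [^] k" "x = t' \<otimes> g [^] l"
    and a: "a = ext_fun M t \<otimes>\<^bsub>D\<^esub> y [^]\<^bsub>D\<^esub> k" and b: "b = ext_fun M t' \<otimes>\<^bsub>D\<^esub> y [^]\<^bsub>D\<^esub> l"
    by (elim adjoinE) blast
  have tc: "t \<in> carrier E" and t'c: "t' \<in> carrier E" using t t' Domain_carrier by auto
  have "t = t' \<otimes> g [^] l \<otimes> inv (g [^] k)"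
    using inv_solve_right[of t "t' \<otimes> g [^] l" "g [^] k"] x tc t'c g by simp
  also have "\<dots> = t' \<otimes> g [^] (l - k)" using g t'c by (simp add: int_pow_diff m_assoc)
  finally have t_eq: "t = t' \<otimes> g [^] (l - k)" .
  then have "g [^] (l - k) = inv t' \<otimes> t" using g tc t'c by (simp add: m_assoc[symmetric])
  then have pow_mem: "g [^] (l - k) \<in> Domain M"
    using subgroup_Domain[OF M] t t' by (simp add: subgroup.m_closed subgroup.m_inv_closed)
  have "ext_fun M t = ext_fun M t' \<otimes>\<^bsub>D\<^esub> y [^]\<^bsub>D\<^esub> (l - k)"
    using ext_fun_eq[OF M graph_mult[OF M ext_fun_graph[OF M t'] ext_fun_graph[OF M pow_mem]]]
    by (simp add: t_eq root[OF pow_mem])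
  then show "a = b"
    using a b y ext_fun_closed[OF M t'] by (simp add: D.m_assoc D.int_pow_mult[symmetric])
qed

lemma adjoin_mult:
  assumes "(x, a) \<in> adjoin M g y" "(x', a') \<in> adjoin M g y"
  shows "(x \<otimes> x', a \<otimes>\<^bsub>D\<^esub> a') \<in> adjoin M g y"
proof -
  obtain t and k :: int where t: "t \<in> Domain M" "x = t \<otimes> g [^] k" "a = ext_fun M t \<otimes>\<^bsub>D\<^esub> y [^]\<^bsub>D\<^esub> k"
    using assms(1) by (rule adjoinE)
  obtain t' and l :: int where t': "t' \<in> Domain M" "x' = t' \<otimes> g [^] l" "a' = ext_fun M t' \<otimes>\<^bsub>D\<^esub> y [^]\<^bsub>D\<^esub> l"
    using assms(2) by (rule adjoinE)
  define c where "c = g [^] k \<otimes> t' \<otimes> inv (g [^] k)"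
  have c: "c \<in> Domain M" "ext_fun M c = ext_fun M t'"
    using conj_mem_Domain[OF M t'(1)] ext_fun_conj[OF M t'(1)] g unfolding c_def by auto
  have "x \<otimes> x' = (t \<otimes> c) \<otimes> g [^] (k + l)"
    using t t' g Domain_carrier unfolding c_def by (simp add: m_assoc int_pow_mult inv_mult_cancel_left)
  moreover have "a \<otimes>\<^bsub>D\<^esub> a' = ext_fun M (t \<otimes> c) \<otimes>\<^bsub>D\<^esub> y [^]\<^bsub>D\<^esub> (k + l)"
    using t t' c y ext_fun_closed[OF M] ext_fun_eq[OF M graph_mult[OF M ext_fun_graph[OF M t(1)] ext_fun_graph[OF M c(1)]]]
    by (simp add: D.int_pow_mult D.m_ac)
  moreover have "t \<otimes> c \<in> Domain M" using subgroup.m_closed[OF subgroup_Domain[OF M] t(1) c(1)] .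
  ultimately show ?thesis using adjoinI by simp
qed

lemma subgroup_Domain_adjoin: "subgroup (Domain (adjoin M g y)) E"
proof (rule subgroupI)
  show "Domain (adjoin M g y) \<subseteq> carrier E"
    using g Domain_carrier by (auto elim!: adjoinE)
  show "Domain (adjoin M g y) \<noteq> {}" using generator_mem_Domain_adjoin by blast
next
  fix x assume "x \<in> Domain (adjoin M g y)"
  then obtain t and k :: int where t: "t \<in> Domain M" and x: "x = t \<otimes> g [^] k"
    by (auto elim!: adjoinE)
  define u where "u = g [^] (- k) \<otimes> inv t \<otimes> inv (g [^] (- k))"
  have u: "u \<in> Domain M"
    unfolding u_def using conj_mem_Domain[OF M] subgroup.m_inv_closed[OF subgroup_Domain[OF M] t] g by simp
  have "inv x = u \<otimes> g [^] (- k)"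
    using x t g Domain_carrier unfolding u_def by (simp add: inv_mult_group int_pow_neg m_assoc)
  then show "inv x \<in> Domain (adjoin M g y)" using adjoinI[OF u, of "- k"] by (auto intro: DomainI)
next
  fix x x' assume "x \<in> Domain (adjoin M g y)" "x' \<in> Domain (adjoin M g y)"
  then show "x \<otimes> x' \<in> Domain (adjoin M g y)" using adjoin_mult by blast
qed

lemma partial_ext_adjoin: "partial_ext (adjoin M g y)"
  unfolding partial_ext_def
proof (intro conjI)
  show "\<forall>s\<in>S. (s, \<phi> s) \<in> adjoin M g y" using graph_\<phi>[OF M] subset_adjoin by blast
  show "Range (adjoin M g y) \<subseteq> carrier D"
    using ext_fun_closed[OF M] y by (auto elim!: adjoinE)
  show "\<forall>(x, a)\<in>adjoin M g y. \<forall>(x', a')\<in>adjoin M g y. (x \<otimes> x', a \<otimes>\<^bsub>D\<^esub> a') \<in> adjoin M g y"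
    using adjoin_mult by fast
qed (fact single_valued_adjoin subgroup_Domain_adjoin)+

end

lemma partial_ext_graph_\<phi>: "partial_ext {(s, \<phi> s) | s. s \<in> S}"
  unfolding partial_ext_def
proof (intro conjI)
  show "single_valued {(s, \<phi> s) | s. s \<in> S}" by (auto simp: single_valued_def)
  have "Domain {(s, \<phi> s) | s. s \<in> S} = S" by auto
  then show "subgroup (Domain {(s, \<phi> s) | s. s \<in> S}) E" using subgroup_S by simp
  show "\<forall>s\<in>S. (s, \<phi> s) \<in> {(s, \<phi> s) | s. s \<in> S}" by blast
  show "\<forall>(x, a)\<in>{(s, \<phi> s) | s. s \<in> S}. \<forall>(y, b)\<in>{(s, \<phi> s) | s. s \<in> S}.
      (x \<otimes> y, a \<otimes>\<^bsub>D\<^esub> b) \<in> {(s, \<phi> s) | s. s \<in> S}"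
    using hom_mult[OF hom_\<phi>] subgroup.m_closed[OF subgroup_S] by force
  show "Range {(s, \<phi> s) | s. s \<in> S} \<subseteq> carrier D" using hom_in_carrier[OF hom_\<phi>] by auto
qed

lemma partial_ext_chain_Union:
  assumes "C \<noteq> {}" and chain: "subset.chain (Collect partial_ext) C"
  shows "partial_ext (\<Union>C)"
proof -
  have C: "partial_ext M" if "M \<in> C" for M using chain that unfolding subset.chain_def by blast
  have common: "\<exists>M\<in>C. p \<in> M \<and> q \<in> M" if "p \<in> \<Union>C" "q \<in> \<Union>C" for p q
    using that chain unfolding subset.chain_def by blast
  have Domain_Union: "x \<in> Domain (\<Union>C) \<longleftrightarrow> (\<exists>M\<in>C. x \<in> Domain M)" for x by blast
  obtain M0 where M0: "M0 \<in> C" using assms(1) by blast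
  have mult: "(x \<otimes> x', a \<otimes>\<^bsub>D\<^esub> a') \<in> \<Union>C" if xa: "(x, a) \<in> \<Union>C" "(x', a') \<in> \<Union>C" for x a x' a'
  proof -
    obtain M where "M \<in> C" "(x, a) \<in> M" "(x', a') \<in> M" using common[OF xa] by blast
    then show ?thesis using graph_mult[OF C[OF \<open>M \<in> C\<close>]] by blast
  qed
  have "single_valued (\<Union>C)"
  proof (rule single_valuedI)
    fix x a b assume "(x, a) \<in> \<Union>C" "(x, b) \<in> \<Union>C"
    then obtain M where "M \<in> C" "(x, a) \<in> M" "(x, b) \<in> M" using common by blast
    then show "a = b" using ext_fun_eq[OF C[OF \<open>M \<in> C\<close>]] by metis
  qed
  moreover have "subgroup (Domain (\<Union>C)) E"
  proof (rule subgroupI)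
    show "Domain (\<Union>C) \<subseteq> carrier E"
    proof
      fix x assume "x \<in> Domain (\<Union>C)"
      then obtain M where "M \<in> C" "x \<in> Domain M" by (auto simp: Domain_Union)
      then show "x \<in> carrier E" using subgroup.mem_carrier[OF subgroup_Domain[OF C]] by blast
    qed
    show "Domain (\<Union>C) \<noteq> {}"
      using subgroup.one_closed[OF subgroup_Domain[OF C[OF M0]]] M0 Domain_Union by blast
  next
    fix x assume "x \<in> Domain (\<Union>C)"
    then obtain M where "M \<in> C" "x \<in> Domain M" by (auto simp: Domain_Union)
    then show "inv x \<in> Domain (\<Union>C)"
      using subgroup.m_inv_closed[OF subgroup_Domain[OF C[OF \<open>M \<in> C\<close>]]] Domain_Union by blast
  next
    fix x x' assume "x \<in> Domain (\<Union>C)" "x' \<in> Domain (\<Union>C)"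
    then obtain a a' where "(x, a) \<in> \<Union>C" "(x', a') \<in> \<Union>C" by blast
    then show "x \<otimes> x' \<in> Domain (\<Union>C)" using mult by blast
  qed
  moreover have "\<forall>s\<in>S. (s, \<phi> s) \<in> \<Union>C" using graph_\<phi>[OF C[OF M0]] M0 by blast
  moreover have "\<forall>(x, a)\<in>\<Union>C. \<forall>(x', a')\<in>\<Union>C. (x \<otimes> x', a \<otimes>\<^bsub>D\<^esub> a') \<in> \<Union>C"
    using mult by blast
  moreover have "Range (\<Union>C) \<subseteq> carrier D"
  proof
    fix a assume "a \<in> Range (\<Union>C)"
    then obtain x M where M: "M \<in> C" and xa: "(x, a) \<in> M" by blast
    then show "a \<in> carrier D"
      using ext_fun_closed[OF C[OF M] DomainI[OF xa]] ext_fun_eq[OF C[OF M] xa] by simp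
  qed
  ultimately show ?thesis unfolding partial_ext_def by (intro conjI)
qed

theorem hom_extension_exists: "\<exists>\<psi>\<in>hom E D. \<forall>s\<in>S. \<psi> s = \<phi> s"
proof -
  have "\<exists>M\<in>Collect partial_ext. \<forall>M'\<in>Collect partial_ext. M \<subseteq> M' \<longrightarrow> M' = M"
  proof (rule subset_Zorn_nonempty)
    show "Collect partial_ext \<noteq> {}" using partial_ext_graph_\<phi> by blast
    show "\<Union>C \<in> Collect partial_ext" if "C \<noteq> {}" "subset.chain (Collect partial_ext) C" for C
      using partial_ext_chain_Union[OF that] by simp
  qed
  then obtain M where M: "partial_ext M" and maximal: "\<And>M'. partial_ext M' \<Longrightarrow> M \<subseteq> M' \<Longrightarrow> M' = M"
    by blast
  have "Domain M = carrier E"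
  proof (rule ccontr)
    assume "Domain M \<noteq> carrier E"
    then obtain g where g: "g \<in> carrier E" "g \<notin> Domain M"
      using subgroup.subset[OF subgroup_Domain[OF M]] by blast
    obtain y where y: "y \<in> carrier D"
      and root: "\<And>m::int. g [^] m \<in> Domain M \<Longrightarrow> ext_fun M (g [^] m) = y [^]\<^bsub>D\<^esub> m"
      using ext_fun_root[OF M g(1)] by blast
    have "adjoin M g y = M"
      using maximal[OF partial_ext_adjoin[OF M g(1) y root] subset_adjoin[OF M g(1) y root]] .
    then show False using generator_mem_Domain_adjoin[OF M g(1) y root] g(2) by simp
  qed
  then show ?thesis using ext_fun_hom[OF M] ext_fun_eq[OF M graph_\<phi>[OF M]] by auto
qed

end

section \<open>Gluing homomorphisms on commuting subgroups\<close>

definition glue_hom ::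
  "('g, 'a) monoid_scheme \<Rightarrow> ('d, 'b) monoid_scheme \<Rightarrow> 'g set \<Rightarrow> 'g set \<Rightarrow> ('g \<Rightarrow> 'd) \<Rightarrow> ('g \<Rightarrow> 'd) \<Rightarrow> 'g \<Rightarrow> 'd"
  where "glue_hom G D A B rA rB x =
    (let (a, b) = SOME (a, b). a \<in> A \<and> b \<in> B \<and> x = a \<otimes>\<^bsub>G\<^esub> b in rA a \<otimes>\<^bsub>D\<^esub> rB b)"

locale glueable_homs = group G + D: comm_group D
  for G :: "('g, 'a) monoid_scheme" (structure) and D :: "('d, 'b) monoid_scheme" +
  fixes A B :: "'g set" and rA rB :: "'g \<Rightarrow> 'd"
  assumes subgroup_A: "subgroup A G" and subgroup_B: "subgroup B G"
    and commute: "\<forall>a\<in>A. \<forall>b\<in>B. a \<otimes> b = b \<otimes> a"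
    and hom_A: "rA \<in> hom (G\<lparr>carrier := A\<rparr>) D" and hom_B: "rB \<in> hom (G\<lparr>carrier := B\<rparr>) D"
    and agree: "\<forall>x\<in>A \<inter> B. rA x = rB x"
begin

lemma rA_mult: "a \<in> A \<Longrightarrow> a' \<in> A \<Longrightarrow> rA (a \<otimes> a') = rA a \<otimes>\<^bsub>D\<^esub> rA a'"
  using hom_mult[OF hom_A] by simp

lemma rB_mult: "b \<in> B \<Longrightarrow> b' \<in> B \<Longrightarrow> rB (b \<otimes> b') = rB b \<otimes>\<^bsub>D\<^esub> rB b'"
  using hom_mult[OF hom_B] by simp

lemma rA_closed: "a \<in> A \<Longrightarrow> rA a \<in> carrier D"
  using hom_in_carrier[OF hom_A] by simp

lemma rB_closed: "b \<in> B \<Longrightarrow> rB b \<in> carrier D"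
  using hom_in_carrier[OF hom_B] by simp

lemma glue_well_defined:
  assumes ab: "a \<in> A" "b \<in> B" and ab': "a' \<in> A" "b' \<in> B" and eq: "a \<otimes> b = a' \<otimes> b'"
  shows "rA a \<otimes>\<^bsub>D\<^esub> rB b = rA a' \<otimes>\<^bsub>D\<^esub> rB b'"
proof -
  have carrier: "a \<in> carrier G" "b \<in> carrier G" "a' \<in> carrier G" "b' \<in> carrier G"
    using ab ab' subgroup.mem_carrier[OF subgroup_A] subgroup.mem_carrier[OF subgroup_B] by auto
  have "inv a' \<otimes> a = inv a' \<otimes> (a \<otimes> b) \<otimes> inv b" using carrier by (simp add: m_assoc)
  also have "\<dots> = inv a' \<otimes> (a' \<otimes> b') \<otimes> inv b" by (simp only: eq)
  also have "\<dots> = b' \<otimes> inv b" using carrier by (simp add: inv_mult_cancel_left)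
  finally have in_both: "inv a' \<otimes> a = b' \<otimes> inv b" .
  have inv_mem: "inv a' \<in> A" "inv b \<in> B"
    using ab(2) ab'(1) subgroup.m_inv_closed[OF subgroup_A] subgroup.m_inv_closed[OF subgroup_B] by auto
  have "inv a' \<otimes> a \<in> A" "b' \<otimes> inv b \<in> B"
    using ab ab' inv_mem subgroup.m_closed[OF subgroup_A] subgroup.m_closed[OF subgroup_B] by auto
  then have "rA (inv a' \<otimes> a) = rB (b' \<otimes> inv b)" using agree in_both by auto
  moreover have "rA (inv a' \<otimes> a) = inv\<^bsub>D\<^esub> (rA a') \<otimes>\<^bsub>D\<^esub> rA a"
    using rA_mult[OF inv_mem(1) ab(1)] hom_restrict_inv[OF subgroup_A D.is_group hom_A ab'(1)] by simp
  moreover have "rB (b' \<otimes> inv b) = rB b' \<otimes>\<^bsub>D\<^esub> inv\<^bsub>D\<^esub> (rB b)"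
    using rB_mult[OF ab'(2) inv_mem(2)] hom_restrict_inv[OF subgroup_B D.is_group hom_B ab(2)] by simp
  ultimately have "inv\<^bsub>D\<^esub> (rA a') \<otimes>\<^bsub>D\<^esub> rA a = rB b' \<otimes>\<^bsub>D\<^esub> inv\<^bsub>D\<^esub> (rB b)" by simp
  then show ?thesis
    by (rule D.mult_eq_of_inv_mult_eq[OF rA_closed[OF ab'(1)] rA_closed[OF ab(1)] rB_closed[OF ab'(2)] rB_closed[OF ab(2)]])
qed

lemma glue_hom_mult_eq:
  assumes "a \<in> A" "b \<in> B"
  shows "glue_hom G D A B rA rB (a \<otimes> b) = rA a \<otimes>\<^bsub>D\<^esub> rB b"
proof -
  let ?P = "\<lambda>(a', b'). a' \<in> A \<and> b' \<in> B \<and> a \<otimes> b = a' \<otimes> b'"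
  have "?P (a, b)" using assms by simp
  then have "?P (SOME p. ?P p)" by (rule someI)
  then show ?thesis
    unfolding glue_hom_def using glue_well_defined[OF assms] by (auto split: prod.split)
qed

lemma glue_hom_left:
  assumes "a \<in> A"
  shows "glue_hom G D A B rA rB a = rA a"
proof -
  have "rB \<one> = \<one>\<^bsub>D\<^esub>"
    using hom_one[OF hom_B subgroup.subgroup_is_group[OF subgroup_B is_group] D.is_group] by simp
  then show ?thesis
    using glue_hom_mult_eq[OF assms subgroup.one_closed[OF subgroup_B]]
      subgroup.mem_carrier[OF subgroup_A assms] rA_closed[OF assms] by simp
qed

lemma glue_hom_hom: "glue_hom G D A B rA rB \<in> hom (G\<lparr>carrier := A <#> B\<rparr>) D"
proof (rule homI)
  fix x assume "x \<in> carrier (G\<lparr>carrier := A <#> B\<rparr>)"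
  then obtain a b where "a \<in> A" "b \<in> B" "x = a \<otimes> b" by (auto elim: set_mult_memE)
  then show "glue_hom G D A B rA rB x \<in> carrier D"
    using glue_hom_mult_eq rA_closed rB_closed by simp
next
  fix x y assume "x \<in> carrier (G\<lparr>carrier := A <#> B\<rparr>)" "y \<in> carrier (G\<lparr>carrier := A <#> B\<rparr>)"
  then obtain a b a' b' where ab: "a \<in> A" "b \<in> B" "x = a \<otimes> b" "a' \<in> A" "b' \<in> B" "y = a' \<otimes> b'"
    by (auto elim!: set_mult_memE)
  have "x \<otimes> y = (a \<otimes> a') \<otimes> (b \<otimes> b')"
    unfolding ab(3,6) by (rule mult_mult_swap_middle)
      (use ab commute[rule_format, OF ab(4,2)] subgroup.mem_carrier[OF subgroup_A]
        subgroup.mem_carrier[OF subgroup_B] in auto)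
  moreover have "a \<otimes> a' \<in> A" "b \<otimes> b' \<in> B"
    using ab subgroup.m_closed[OF subgroup_A] subgroup.m_closed[OF subgroup_B] by auto
  ultimately show "glue_hom G D A B rA rB (x \<otimes>\<^bsub>G\<lparr>carrier := A <#> B\<rparr>\<^esub> y)
      = glue_hom G D A B rA rB x \<otimes>\<^bsub>D\<^esub> glue_hom G D A B rA rB y"
    using ab glue_hom_mult_eq rA_closed rB_closed by (simp add: rA_mult rB_mult D.m_ac)
qed

end

section \<open>Cocycles and the twisted product\<close>

definition cobounds :: "('g, 'a) monoid_scheme \<Rightarrow> ('d, 'b) monoid_scheme \<Rightarrow> ('g \<Rightarrow> 'd) \<Rightarrow> ('g \<Rightarrow> 'g \<Rightarrow> 'd) \<Rightarrow> bool"
  where "cobounds G D c f \<longleftrightarrow> (\<forall>g\<in>carrier G. c g \<in> carrier D) \<and>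
    (\<forall>g\<in>carrier G. \<forall>h\<in>carrier G. f g h = c h \<otimes>\<^bsub>D\<^esub> inv\<^bsub>D\<^esub> (c (g \<otimes>\<^bsub>G\<^esub> h)) \<otimes>\<^bsub>D\<^esub> c g)"

lemma coboundary2_iff_cobounds: "coboundary2 G D f \<longleftrightarrow> (\<exists>c. cobounds G D c f)"
  unfolding coboundary2_def cobounds_def by blast

definition twisted_product :: "('g, 'a) monoid_scheme \<Rightarrow> ('d, 'b) monoid_scheme \<Rightarrow> ('g \<Rightarrow> 'g \<Rightarrow> 'd) \<Rightarrow> ('d \<times> 'g) monoid"
  where "twisted_product G D f =
    \<lparr>carrier = carrier D \<times> carrier G,
     monoid.mult = (\<lambda>(a, g) (b, h). (a \<otimes>\<^bsub>D\<^esub> b \<otimes>\<^bsub>D\<^esub> f g h, g \<otimes>\<^bsub>G\<^esub> h)),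
     monoid.one = (inv\<^bsub>D\<^esub> (f \<one>\<^bsub>G\<^esub> \<one>\<^bsub>G\<^esub>), \<one>\<^bsub>G\<^esub>)\<rparr>"

lemma twisted_product_carrier [simp]: "carrier (twisted_product G D f) = carrier D \<times> carrier G"
  by (simp add: twisted_product_def)

lemma twisted_product_mult [simp]:
  "(a, g) \<otimes>\<^bsub>twisted_product G D f\<^esub> (b, h) = (a \<otimes>\<^bsub>D\<^esub> b \<otimes>\<^bsub>D\<^esub> f g h, g \<otimes>\<^bsub>G\<^esub> h)"
  by (simp add: twisted_product_def)

lemma twisted_product_one [simp]:
  "\<one>\<^bsub>twisted_product G D f\<^esub> = (inv\<^bsub>D\<^esub> (f \<one>\<^bsub>G\<^esub> \<one>\<^bsub>G\<^esub>), \<one>\<^bsub>G\<^esub>)"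
  by (simp add: twisted_product_def)

locale cocycle = G: group G + D: comm_group D
  for G :: "('g, 'a) monoid_scheme" (structure) and D :: "('d, 'b) monoid_scheme" +
  fixes f :: "'g \<Rightarrow> 'g \<Rightarrow> 'd"
  assumes cocycle2: "cocycle2 G D f"
begin

abbreviation (input) E where "E \<equiv> twisted_product G D f"

lemma f_closed [simp]: "g \<in> carrier G \<Longrightarrow> h \<in> carrier G \<Longrightarrow> f g h \<in> carrier D"
  using cocycle2 unfolding cocycle2_def by blast

lemma cocycle_eq:
  "\<lbrakk>g \<in> carrier G; h \<in> carrier G; k \<in> carrier G\<rbrakk>
   \<Longrightarrow> f g h \<otimes>\<^bsub>D\<^esub> f (g \<otimes> h) k = f h k \<otimes>\<^bsub>D\<^esub> f g (h \<otimes> k)"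
  using cocycle2 unfolding cocycle2_def by blast

lemma f_one_left: "h \<in> carrier G \<Longrightarrow> f \<one> h = f \<one> \<one>"
  using cocycle_eq[of \<one> \<one> h] by (simp add: D.m_comm)

lemma twisted_product_group: "group E"
proof (rule groupI)
  fix x y assume "x \<in> carrier E" "y \<in> carrier E"
  then show "x \<otimes>\<^bsub>E\<^esub> y \<in> carrier E" by auto
next
  show "\<one>\<^bsub>E\<^esub> \<in> carrier E" by simp
next
  fix x y z assume "x \<in> carrier E" "y \<in> carrier E" "z \<in> carrier E"
  then obtain a b c g h k where xyz: "x = (a, g)" "y = (b, h)" "z = (c, k)"
    and carrier: "a \<in> carrier D" "b \<in> carrier D" "c \<in> carrier D" "g \<in> carrier G" "h \<in> carrier G" "k \<in> carrier G"
    by auto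
  have "a \<otimes>\<^bsub>D\<^esub> b \<otimes>\<^bsub>D\<^esub> f g h \<otimes>\<^bsub>D\<^esub> c \<otimes>\<^bsub>D\<^esub> f (g \<otimes> h) k
      = a \<otimes>\<^bsub>D\<^esub> b \<otimes>\<^bsub>D\<^esub> c \<otimes>\<^bsub>D\<^esub> (f g h \<otimes>\<^bsub>D\<^esub> f (g \<otimes> h) k)"
    using carrier by (simp add: D.m_ac)
  also have "\<dots> = a \<otimes>\<^bsub>D\<^esub> b \<otimes>\<^bsub>D\<^esub> c \<otimes>\<^bsub>D\<^esub> (f h k \<otimes>\<^bsub>D\<^esub> f g (h \<otimes> k))"
    by (simp only: cocycle_eq[OF carrier(4-6)])
  also have "\<dots> = a \<otimes>\<^bsub>D\<^esub> (b \<otimes>\<^bsub>D\<^esub> c \<otimes>\<^bsub>D\<^esub> f h k) \<otimes>\<^bsub>D\<^esub> f g (h \<otimes> k)"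
    using carrier by (simp add: D.m_ac)
  finally show "x \<otimes>\<^bsub>E\<^esub> y \<otimes>\<^bsub>E\<^esub> z = x \<otimes>\<^bsub>E\<^esub> (y \<otimes>\<^bsub>E\<^esub> z)"
    using xyz carrier by (simp add: G.m_assoc)
next
  fix x assume "x \<in> carrier E"
  then obtain a g where x: "x = (a, g)" and a: "a \<in> carrier D" and g: "g \<in> carrier G" by auto
  have "inv\<^bsub>D\<^esub> (f \<one> \<one>) \<otimes>\<^bsub>D\<^esub> a \<otimes>\<^bsub>D\<^esub> f \<one> \<one> = a"
    using a by (simp add: D.m_comm[of "inv\<^bsub>D\<^esub> (f \<one> \<one>)" a] D.m_assoc)
  then show "\<one>\<^bsub>E\<^esub> \<otimes>\<^bsub>E\<^esub> x = x"
    using x a g by (simp add: f_one_left[OF g])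
  define u where "u = a \<otimes>\<^bsub>D\<^esub> f (inv g) g"
  have u: "u \<in> carrier D" unfolding u_def using a g by simp
  have "inv\<^bsub>D\<^esub> (u \<otimes>\<^bsub>D\<^esub> f \<one> \<one>) \<otimes>\<^bsub>D\<^esub> u = inv\<^bsub>D\<^esub> (f \<one> \<one>)"
    using u by (simp add: D.inv_mult D.m_ac D.mult_inv_cancel_left)
  then have "(inv\<^bsub>D\<^esub> (u \<otimes>\<^bsub>D\<^esub> f \<one> \<one>), inv g) \<otimes>\<^bsub>E\<^esub> x = \<one>\<^bsub>E\<^esub>"
    using x a g u unfolding u_def by (simp add: D.m_assoc)
  moreover have "(inv\<^bsub>D\<^esub> (u \<otimes>\<^bsub>D\<^esub> f \<one> \<one>), inv g) \<in> carrier E" using u g by simp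
  ultimately show "\<exists>y\<in>carrier E. y \<otimes>\<^bsub>E\<^esub> x = \<one>\<^bsub>E\<^esub>" by blast
qed

lemma snd_hom: "snd \<in> hom E G"
  by (rule homI) auto

lemma snd_inv: "x \<in> carrier E \<Longrightarrow> snd (inv\<^bsub>E\<^esub> x) = inv (snd x)"
  using group_hom.hom_inv[of E G snd x] twisted_product_group G.is_group snd_hom
  by (simp add: group_hom_def group_hom_axioms_def)

lemma subgroup_Times:
  assumes L: "subgroup L G"
  shows "subgroup (carrier D \<times> L) E"
proof -
  interpret E: group E by (rule twisted_product_group)
  have L_carrier: "L \<subseteq> carrier G" using subgroup.subset[OF L] .
  show ?thesis
  proof (rule E.subgroupI)
    show "carrier D \<times> L \<subseteq> carrier E" using L_carrier by auto
    show "carrier D \<times> L \<noteq> {}" using subgroup.one_closed[OF L] by blast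
  next
    fix x assume x: "x \<in> carrier D \<times> L"
    then have "x \<in> carrier E" using L_carrier by auto
    then show "inv\<^bsub>E\<^esub> x \<in> carrier D \<times> L"
      using snd_inv x subgroup.m_inv_closed[OF L] E.inv_closed by (auto simp: mem_Times_iff)
  next
    fix x y assume "x \<in> carrier D \<times> L" "y \<in> carrier D \<times> L"
    then show "x \<otimes>\<^bsub>E\<^esub> y \<in> carrier D \<times> L"
      using L_carrier subgroup.m_closed[OF L] by (auto intro!: D.m_closed f_closed)
  qed
qed

context
  fixes L c
  assumes L: "subgroup L G" and c: "cobounds (G\<lparr>carrier := L\<rparr>) D c f"
begin

lemma cobounds_closed: "l \<in> L \<Longrightarrow> c l \<in> carrier D"
  using c unfolding cobounds_def by simp

lemma cobounds_eq: "g \<in> L \<Longrightarrow> h \<in> L \<Longrightarrow> f g h = c h \<otimes>\<^bsub>D\<^esub> inv\<^bsub>D\<^esub> (c (g \<otimes> h)) \<otimes>\<^bsub>D\<^esub> c g"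
  using c unfolding cobounds_def by simp

lemma cobounds_one: "c \<one> = f \<one> \<one>"
  using cobounds_eq[of \<one> \<one>] cobounds_closed subgroup.one_closed[OF L] by simp

lemma hom_of_cobounds: "(\<lambda>(a, l). a \<otimes>\<^bsub>D\<^esub> c l) \<in> hom (E\<lparr>carrier := carrier D \<times> L\<rparr>) D"
proof (rule homI)
  fix x assume "x \<in> carrier (E\<lparr>carrier := carrier D \<times> L\<rparr>)"
  then show "(case x of (a, l) \<Rightarrow> a \<otimes>\<^bsub>D\<^esub> c l) \<in> carrier D"
    using cobounds_closed by auto
next
  fix x y assume "x \<in> carrier (E\<lparr>carrier := carrier D \<times> L\<rparr>)" "y \<in> carrier (E\<lparr>carrier := carrier D \<times> L\<rparr>)"
  then obtain a g b h where xy: "x = (a, g)" "y = (b, h)" "a \<in> carrier D" "b \<in> carrier D" "g \<in> L" "h \<in> L"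
    by auto
  have "c (g \<otimes> h) \<in> carrier D" using xy subgroup.m_closed[OF L] cobounds_closed by simp
  with xy show "(case x \<otimes>\<^bsub>E\<lparr>carrier := carrier D \<times> L\<rparr>\<^esub> y of (a, l) \<Rightarrow> a \<otimes>\<^bsub>D\<^esub> c l)
      = (case x of (a, l) \<Rightarrow> a \<otimes>\<^bsub>D\<^esub> c l) \<otimes>\<^bsub>D\<^esub> (case y of (a, l) \<Rightarrow> a \<otimes>\<^bsub>D\<^esub> c l)"
    using cobounds_closed by (simp add: cobounds_eq D.m_ac)
qed

end

text \<open>The central copy of \<open>D\<close> in \<open>E\<close> is \<open>d \<mapsto> (d - f 1 1, 1)\<close>, as the unit of \<open>E\<close> is
  \<open>(- f 1 1, 1)\<close>. A homomorphism \<open>E \<rightarrow> D\<close> that is the identity there splits the extension.\<close>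

lemma cobounds_of_retraction:
  assumes \<psi>: "\<psi> \<in> hom E D" and retraction: "\<And>d. d \<in> carrier D \<Longrightarrow> \<psi> (d \<otimes>\<^bsub>D\<^esub> inv\<^bsub>D\<^esub> (f \<one> \<one>), \<one>) = d"
  shows "cobounds G D (\<lambda>g. \<psi> (\<one>\<^bsub>D\<^esub>, g)) f"
  unfolding cobounds_def
proof (intro conjI ballI)
  fix g assume "g \<in> carrier G"
  then show "\<psi> (\<one>\<^bsub>D\<^esub>, g) \<in> carrier D" using hom_in_carrier[OF \<psi>] by simp
next
  fix g h assume g: "g \<in> carrier G" and h: "h \<in> carrier G"
  let ?c = "\<lambda>g. \<psi> (\<one>\<^bsub>D\<^esub>, g)"
  have "?c g \<otimes>\<^bsub>D\<^esub> ?c h = \<psi> ((\<one>\<^bsub>D\<^esub>, g) \<otimes>\<^bsub>E\<^esub> (\<one>\<^bsub>D\<^esub>, h))"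
    by (rule hom_mult[OF \<psi>, symmetric]) (use g h in simp_all)
  also have "(\<one>\<^bsub>D\<^esub>, g) \<otimes>\<^bsub>E\<^esub> (\<one>\<^bsub>D\<^esub>, h) = (f g h \<otimes>\<^bsub>D\<^esub> inv\<^bsub>D\<^esub> (f \<one> \<one>), \<one>) \<otimes>\<^bsub>E\<^esub> (\<one>\<^bsub>D\<^esub>, g \<otimes> h)"
    using g h by (simp add: f_one_left[OF G.m_closed[OF g h]] D.m_assoc)
  also have "\<psi> \<dots> = \<psi> (f g h \<otimes>\<^bsub>D\<^esub> inv\<^bsub>D\<^esub> (f \<one> \<one>), \<one>) \<otimes>\<^bsub>D\<^esub> ?c (g \<otimes> h)"
    by (rule hom_mult[OF \<psi>]) (use g h in simp_all)
  also have "\<psi> (f g h \<otimes>\<^bsub>D\<^esub> inv\<^bsub>D\<^esub> (f \<one> \<one>), \<one>) = f g h"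
    using g h by (simp add: retraction)
  finally have eq: "?c g \<otimes>\<^bsub>D\<^esub> ?c h = f g h \<otimes>\<^bsub>D\<^esub> ?c (g \<otimes> h)" .
  have closed: "?c g \<in> carrier D" "?c h \<in> carrier D" "?c (g \<otimes> h) \<in> carrier D"
    using g h hom_in_carrier[OF \<psi>] by simp_all
  have "f g h = ?c g \<otimes>\<^bsub>D\<^esub> ?c h \<otimes>\<^bsub>D\<^esub> inv\<^bsub>D\<^esub> (?c (g \<otimes> h))"
    using D.inv_solve_right[of "f g h" "?c g \<otimes>\<^bsub>D\<^esub> ?c h" "?c (g \<otimes> h)"] eq closed g h by simp
  also have "\<dots> = ?c h \<otimes>\<^bsub>D\<^esub> inv\<^bsub>D\<^esub> (?c (g \<otimes> h)) \<otimes>\<^bsub>D\<^esub> ?c g"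
    using closed by (simp add: D.m_ac)
  finally show "f g h = ?c h \<otimes>\<^bsub>D\<^esub> inv\<^bsub>D\<^esub> (?c (g \<otimes> h)) \<otimes>\<^bsub>D\<^esub> ?c g" .
qed

lemma snd_mult: "snd (x \<otimes>\<^bsub>E\<^esub> y) = snd x \<otimes> snd y"
  by (cases x, cases y) simp

lemma twisted_commutator_mem:
  assumes L: "subgroup L G" and x: "x \<in> carrier D \<times> L" and y: "y \<in> carrier D \<times> L"
  shows "commutator E x y \<in> carrier D \<times> derived G L"
proof -
  interpret E: group E by (rule twisted_product_group)
  have xy: "x \<in> carrier E" "y \<in> carrier E"
    using x y subgroup.mem_carrier[OF subgroup_Times[OF L]] by auto
  have L_mem: "snd x \<in> L" "snd y \<in> L" using x y by auto
  have "snd (commutator E x y) = commutator G (snd x) (snd y)"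
    using xy by (simp add: commutator_def snd_mult snd_inv)
  then have "snd (commutator E x y) \<in> derived G L"
    using G.commutator_mem_derived[OF L_mem] by simp
  moreover have "commutator E x y \<in> carrier E"
    unfolding commutator_def using xy by (intro E.m_closed E.inv_closed)
  ultimately show ?thesis by (auto simp: mem_Times_iff)
qed

end

lemma cocycle2_closed: "cocycle2 G D f \<Longrightarrow> g \<in> carrier G \<Longrightarrow> h \<in> carrier G \<Longrightarrow> f g h \<in> carrier D"
  unfolding cocycle2_def by blast

lemma cocycle2_quotient:
  assumes G: "monoid G" and D: "comm_group D" and f1: "cocycle2 G D f1" and f2: "cocycle2 G D f2"
  shows "cocycle2 G D (\<lambda>g h. f1 g h \<otimes>\<^bsub>D\<^esub> inv\<^bsub>D\<^esub> (f2 g h))"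
proof -
  interpret G: monoid G by (rule G)
  interpret D: comm_group D by (rule D)
  have closed: "f1 g h \<in> carrier D" "f2 g h \<in> carrier D" if "g \<in> carrier G" "h \<in> carrier G" for g h
    using cocycle2_closed[OF f1 that] cocycle2_closed[OF f2 that] by auto
  have quotient_mult: "(a \<otimes>\<^bsub>D\<^esub> inv\<^bsub>D\<^esub> b) \<otimes>\<^bsub>D\<^esub> (c \<otimes>\<^bsub>D\<^esub> inv\<^bsub>D\<^esub> d) = (a \<otimes>\<^bsub>D\<^esub> c) \<otimes>\<^bsub>D\<^esub> inv\<^bsub>D\<^esub> (b \<otimes>\<^bsub>D\<^esub> d)"
    if "a \<in> carrier D" "b \<in> carrier D" "c \<in> carrier D" "d \<in> carrier D" for a b c d
    using that by (simp add: D.inv_mult D.m_ac)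
  show ?thesis
    unfolding cocycle2_def
  proof (intro conjI ballI)
    fix g h k assume ghk: "g \<in> carrier G" "h \<in> carrier G" "k \<in> carrier G"
    have "f1 g h \<otimes>\<^bsub>D\<^esub> f1 (g \<otimes>\<^bsub>G\<^esub> h) k = f1 h k \<otimes>\<^bsub>D\<^esub> f1 g (h \<otimes>\<^bsub>G\<^esub> k)"
      "f2 g h \<otimes>\<^bsub>D\<^esub> f2 (g \<otimes>\<^bsub>G\<^esub> h) k = f2 h k \<otimes>\<^bsub>D\<^esub> f2 g (h \<otimes>\<^bsub>G\<^esub> k)"
      using f1 f2 ghk unfolding cocycle2_def by auto
    then show "(f1 g h \<otimes>\<^bsub>D\<^esub> inv\<^bsub>D\<^esub> (f2 g h)) \<otimes>\<^bsub>D\<^esub> (f1 (g \<otimes>\<^bsub>G\<^esub> h) k \<otimes>\<^bsub>D\<^esub> inv\<^bsub>D\<^esub> (f2 (g \<otimes>\<^bsub>G\<^esub> h) k))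
      = (f1 h k \<otimes>\<^bsub>D\<^esub> inv\<^bsub>D\<^esub> (f2 h k)) \<otimes>\<^bsub>D\<^esub> (f1 g (h \<otimes>\<^bsub>G\<^esub> k) \<otimes>\<^bsub>D\<^esub> inv\<^bsub>D\<^esub> (f2 g (h \<otimes>\<^bsub>G\<^esub> k)))"
      using ghk closed by (simp add: quotient_mult)
  qed (use closed in simp)
qed

lemma nu_val_eq_imp_quotient_symmetric:
  assumes D: "comm_group D" and f1: "cocycle2 G D f1" and f2: "cocycle2 G D f2"
    and hk: "h \<in> carrier G" "k \<in> carrier G" and nu: "nu_val G D f1 h k = nu_val G D f2 h k"
  shows "f1 h k \<otimes>\<^bsub>D\<^esub> inv\<^bsub>D\<^esub> (f2 h k) = f1 k h \<otimes>\<^bsub>D\<^esub> inv\<^bsub>D\<^esub> (f2 k h)"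
  using nu unfolding nu_val_def
  by (rule comm_group.mult_inv_eq_swap[OF D cocycle2_closed[OF f1 hk] cocycle2_closed[OF f1 hk(2,1)]
        cocycle2_closed[OF f2 hk] cocycle2_closed[OF f2 hk(2,1)]])

section \<open>Central products\<close>

locale central_product_cocycle = cocycle G D f
  for G :: "('g, 'a) monoid_scheme" (structure) and D :: "('d, 'b) monoid_scheme" and f +
  fixes H K :: "'g set" and cH cK :: "'g \<Rightarrow> 'd"
  assumes subgroup_H: "subgroup H G" and subgroup_K: "subgroup K G"
    and product: "carrier G = H <#> K"
    and commute: "\<forall>h\<in>H. \<forall>k\<in>K. h \<otimes> k = k \<otimes> h"
    and derived_inter: "derived G H \<inter> derived G K = {\<one>}"
    and divisible: "divisible_group D"
    and cobounds_H: "cobounds (G\<lparr>carrier := H\<rparr>) D cH f"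
    and cobounds_K: "cobounds (G\<lparr>carrier := K\<rparr>) D cK f"
    and symmetric: "\<forall>h\<in>H. \<forall>k\<in>K. f h k = f k h"
begin

lemma twisted_commute:
  assumes "x \<in> carrier D \<times> H" "y \<in> carrier D \<times> K"
  shows "x \<otimes>\<^bsub>E\<^esub> y = y \<otimes>\<^bsub>E\<^esub> x"
proof -
  obtain a h b k where x: "x = (a, h)" "a \<in> carrier D" "h \<in> H" and y: "y = (b, k)" "b \<in> carrier D" "k \<in> K"
    using assms by auto
  then show ?thesis
    using commute[rule_format, OF x(3) y(3)] symmetric[rule_format, OF x(3) y(3)] by (simp add: D.m_comm)
qed

lemma twisted_decomp:
  assumes x: "x \<in> carrier E"
  obtains x1 x2 where "x1 \<in> carrier D \<times> H" "x2 \<in> carrier D \<times> K" "x = x1 \<otimes>\<^bsub>E\<^esub> x2"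
proof -
  obtain a h k where x: "x = (a, h \<otimes> k)" "a \<in> carrier D" "h \<in> H" "k \<in> K"
    using x product unfolding set_mult_def by auto
  have "h \<in> carrier G" "k \<in> carrier G"
    using x subgroup.mem_carrier[OF subgroup_H] subgroup.mem_carrier[OF subgroup_K] by auto
  then have "x = (a \<otimes>\<^bsub>D\<^esub> inv\<^bsub>D\<^esub> (f h k), h) \<otimes>\<^bsub>E\<^esub> (\<one>\<^bsub>D\<^esub>, k)"
    using x by (simp add: D.m_assoc)
  moreover have "(a \<otimes>\<^bsub>D\<^esub> inv\<^bsub>D\<^esub> (f h k), h) \<in> carrier D \<times> H" "(\<one>\<^bsub>D\<^esub>, k) \<in> carrier D \<times> K"
    using x \<open>h \<in> carrier G\<close> \<open>k \<in> carrier G\<close> by auto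
  ultimately show ?thesis using that by blast
qed

definition H_hom :: "'d \<times> 'g \<Rightarrow> 'd" where "H_hom = (\<lambda>(a, h). a \<otimes>\<^bsub>D\<^esub> cH h)"
definition K_hom :: "'d \<times> 'g \<Rightarrow> 'd" where "K_hom = (\<lambda>(a, k). a \<otimes>\<^bsub>D\<^esub> cK k)"

abbreviation (input) D_H' where "D_H' \<equiv> carrier D \<times> derived G H"
abbreviation (input) D_K' where "D_K' \<equiv> carrier D \<times> derived G K"

lemma subgroup_derived_H: "subgroup (derived G H) G"
  using G.derived_is_subgroup[OF subgroup.subset[OF subgroup_H]] .

lemma subgroup_derived_K: "subgroup (derived G K) G"
  using G.derived_is_subgroup[OF subgroup.subset[OF subgroup_K]] .

lemma D_H'_subset: "D_H' \<subseteq> carrier D \<times> H"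
  using G.derived_incl[OF order_refl subgroup_H] by auto

lemma D_K'_subset: "D_K' \<subseteq> carrier D \<times> K"
  using G.derived_incl[OF order_refl subgroup_K] by auto

lemma hom_H_hom: "H_hom \<in> hom (E\<lparr>carrier := carrier D \<times> H\<rparr>) D"
  unfolding H_hom_def by (rule hom_of_cobounds[OF subgroup_H cobounds_H])

lemma hom_K_hom: "K_hom \<in> hom (E\<lparr>carrier := carrier D \<times> K\<rparr>) D"
  unfolding K_hom_def by (rule hom_of_cobounds[OF subgroup_K cobounds_K])

lemma glueable_homs: "glueable_homs E D D_H' D_K' H_hom K_hom"
proof (intro glueable_homs.intro glueable_homs_axioms.intro)
  show "group E" by (rule twisted_product_group)
  show "comm_group D" by (rule D.comm_group_axioms)
  show "subgroup D_H' E" "subgroup D_K' E"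
    using subgroup_Times[OF subgroup_derived_H] subgroup_Times[OF subgroup_derived_K] .
  show "\<forall>a\<in>D_H'. \<forall>b\<in>D_K'. a \<otimes>\<^bsub>E\<^esub> b = b \<otimes>\<^bsub>E\<^esub> a"
    using twisted_commute D_H'_subset D_K'_subset by blast
  show "H_hom \<in> hom (E\<lparr>carrier := D_H'\<rparr>) D" using hom_restrict_subset[OF hom_H_hom D_H'_subset] .
  show "K_hom \<in> hom (E\<lparr>carrier := D_K'\<rparr>) D" using hom_restrict_subset[OF hom_K_hom D_K'_subset] .
  show "\<forall>x\<in>D_H' \<inter> D_K'. H_hom x = K_hom x"
  proof
    fix x assume x: "x \<in> D_H' \<inter> D_K'"
    then have "snd x \<in> derived G H \<inter> derived G K" by auto
    then have "snd x = \<one>" using derived_inter by simp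
    then show "H_hom x = K_hom x"
      using cobounds_one[OF subgroup_H cobounds_H] cobounds_one[OF subgroup_K cobounds_K]
      by (cases x) (simp add: H_hom_def K_hom_def)
  qed
qed

lemma twisted_commutator_split:
  assumes x: "x \<in> carrier E" and y: "y \<in> carrier E"
  obtains c1 c2 where "c1 \<in> D_H'" "c2 \<in> D_K'" "H_hom c1 = \<one>\<^bsub>D\<^esub>" "K_hom c2 = \<one>\<^bsub>D\<^esub>"
    "commutator E x y = c1 \<otimes>\<^bsub>E\<^esub> c2"
proof -
  interpret E: group E by (rule twisted_product_group)
  obtain x1 x2 where x12: "x1 \<in> carrier D \<times> H" "x2 \<in> carrier D \<times> K" "x = x1 \<otimes>\<^bsub>E\<^esub> x2"
    using twisted_decomp[OF x] .
  obtain y1 y2 where y12: "y1 \<in> carrier D \<times> H" "y2 \<in> carrier D \<times> K" "y = y1 \<otimes>\<^bsub>E\<^esub> y2"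
    using twisted_decomp[OF y] .
  have comm: "\<forall>a\<in>carrier D \<times> H. \<forall>b\<in>carrier D \<times> K. a \<otimes>\<^bsub>E\<^esub> b = b \<otimes>\<^bsub>E\<^esub> a"
    using twisted_commute by blast
  show ?thesis
  proof
    show "commutator E x y
      = commutator E x1 y1 \<otimes>\<^bsub>E\<^esub> commutator E x2 y2"
      unfolding x12(3) y12(3)
      by (rule E.commutator_of_products[OF subgroup_Times[OF subgroup_H] subgroup_Times[OF subgroup_K]
            comm x12(1) y12(1) x12(2) y12(2)])
    show "commutator E x1 y1 \<in> D_H'"
      using twisted_commutator_mem[OF subgroup_H x12(1) y12(1)] .
    show "commutator E x2 y2 \<in> D_K'"
      using twisted_commutator_mem[OF subgroup_K x12(2) y12(2)] .
    show "H_hom (commutator E x1 y1) = \<one>\<^bsub>D\<^esub>"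
      using E.hom_restrict_commutator[OF D.comm_group_axioms subgroup_Times[OF subgroup_H] hom_H_hom x12(1) y12(1)] .
    show "K_hom (commutator E x2 y2) = \<one>\<^bsub>D\<^esub>"
      using E.hom_restrict_commutator[OF D.comm_group_axioms subgroup_Times[OF subgroup_K] hom_K_hom x12(2) y12(2)] .
  qed
qed

lemma divisible_extension_glue_hom: "divisible_extension E D (D_H' <#>\<^bsub>E\<^esub> D_K') (glue_hom E D D_H' D_K' H_hom K_hom)"
proof -
  interpret glueable_homs E D D_H' D_K' H_hom K_hom by (rule glueable_homs)
  have commutators: "commutator E x y \<in> D_H' <#>\<^bsub>E\<^esub> D_K' \<and>
      glue_hom E D D_H' D_K' H_hom K_hom (commutator E x y) = \<one>\<^bsub>D\<^esub>"
    if xy: "x \<in> carrier E" "y \<in> carrier E" for x y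
  proof -
    obtain c1 c2 where c: "c1 \<in> D_H'" "c2 \<in> D_K'" "H_hom c1 = \<one>\<^bsub>D\<^esub>" "K_hom c2 = \<one>\<^bsub>D\<^esub>"
      and split: "commutator E x y = c1 \<otimes>\<^bsub>E\<^esub> c2"
      using twisted_commutator_split[OF xy] by blast
    then show ?thesis using set_mult_memI[OF c(1,2)] glue_hom_mult_eq[OF c(1,2)] by simp
  qed
  show ?thesis
  proof (intro divisible_extension.intro divisible_extension_axioms.intro)
    show "group E" by (rule twisted_product_group)
    show "comm_group D" by (rule D.comm_group_axioms)
    show "subgroup (D_H' <#>\<^bsub>E\<^esub> D_K') E"
      by (rule subgroup_set_mult_commuting[OF subgroup_A subgroup_B commute])
  qed (use divisible glue_hom_hom commutators in auto)
qed

theorem coboundary: "coboundary2 G D f"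
proof -
  interpret glueable_homs E D D_H' D_K' H_hom K_hom by (rule glueable_homs)
  obtain \<psi> where \<psi>: "\<psi> \<in> hom E D"
    and extends: "\<And>s. s \<in> D_H' <#>\<^bsub>E\<^esub> D_K' \<Longrightarrow> \<psi> s = glue_hom E D D_H' D_K' H_hom K_hom s"
    using divisible_extension.hom_extension_exists[OF divisible_extension_glue_hom] by blast
  have "\<psi> (d \<otimes>\<^bsub>D\<^esub> inv\<^bsub>D\<^esub> (f \<one> \<one>), \<one>) = d" if d: "d \<in> carrier D" for d
  proof -
    have central: "(d \<otimes>\<^bsub>D\<^esub> inv\<^bsub>D\<^esub> (f \<one> \<one>), \<one>) \<in> D_H'"
      using d subgroup.one_closed[OF subgroup_derived_H] by simp
    have "(d \<otimes>\<^bsub>D\<^esub> inv\<^bsub>D\<^esub> (f \<one> \<one>), \<one>) \<otimes>\<^bsub>E\<^esub> \<one>\<^bsub>E\<^esub> \<in> D_H' <#>\<^bsub>E\<^esub> D_K'"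
      by (rule set_mult_memI[OF central subgroup.one_closed[OF subgroup_B]])
    then have "(d \<otimes>\<^bsub>D\<^esub> inv\<^bsub>D\<^esub> (f \<one> \<one>), \<one>) \<in> D_H' <#>\<^bsub>E\<^esub> D_K'"
      using r_one[OF subgroup.mem_carrier[OF subgroup_A central]] by simp
    then show ?thesis
      using d extends glue_hom_left[OF central] cobounds_one[OF subgroup_H cobounds_H]
      by (simp add: H_hom_def D.m_assoc)
  qed
  then show ?thesis
    using cobounds_of_retraction[OF \<psi>] coboundary2_iff_cobounds by blast
qed

end

theorem corollary3p4:
  fixes G :: "('g, 'a) monoid_scheme" and D :: "('d, 'b) monoid_scheme"
    and H K :: "'g set"
  assumes "group G"
    and "H \<lhd> G" and "K \<lhd> G"
    and "carrier G = H <#>\<^bsub>G\<^esub> K"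
    and "\<forall>h\<in>H. \<forall>k\<in>K. h \<otimes>\<^bsub>G\<^esub> k = k \<otimes>\<^bsub>G\<^esub> h"
    and "derived G H \<inter> derived G K = {\<one>\<^bsub>G\<^esub>}"
    and "comm_group D" and "divisible_group D"
    and "cocycle2 G D f1" and "cocycle2 G D f2"
    and "cohomologous2 (restr_grp G H) D f1 f2"
    and "cohomologous2 (restr_grp G K) D f1 f2"
    and "\<forall>h\<in>H. \<forall>k\<in>K. nu_val G D f1 h k = nu_val G D f2 h k"
  shows "cohomologous2 G D f1 f2"
proof -
  interpret G: group G by (rule assms(1))
  define f where "f = (\<lambda>g h. f1 g h \<otimes>\<^bsub>D\<^esub> inv\<^bsub>D\<^esub> (f2 g h))"
  have H: "subgroup H G" and K: "subgroup K G" using assms(2,3) normal_imp_subgroup by auto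
  obtain cH cK where "cobounds (restr_grp G H) D cH f" "cobounds (restr_grp G K) D cK f"
    using assms(11,12) unfolding cohomologous2_def coboundary2_iff_cobounds f_def by blast
  moreover have "f h k = f k h" if "h \<in> H" "k \<in> K" for h k
    unfolding f_def using that assms(13) subgroup.mem_carrier[OF H] subgroup.mem_carrier[OF K]
    by (intro nu_val_eq_imp_quotient_symmetric[OF assms(7,9,10)]) auto
  moreover have "cocycle2 G D f"
    unfolding f_def by (rule cocycle2_quotient[OF G.monoid_axioms assms(7,9,10)])
  ultimately have "central_product_cocycle G D f H K cH cK"
    using assms(1,4-8) H K
    by (intro central_product_cocycle.intro central_product_cocycle_axioms.intro cocycle.intro cocycle_axioms.intro) auto
  then show ?thesis
    unfolding cohomologous2_def f_def[symmetric] by (rule central_product_cocycle.coboundary)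
qed

end
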